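(* Let $d_{\mathrm{in}}, d_{\mathrm{out}} \ge 1$, let $\mathbf{U}^{(t)} \in \mathbb{R}^{d_{\mathrm{out}}\times d_{\mathrm{in}}}$ be a fixed matrix (the task vector of task $t$ for a given module), and let $(\mathbf{x}, \mathbf{g}_{\mathbf{y}})$ be a random pair with $\mathbf{x}\in\mathbb{R}^{d_{\mathrm{in}}}$ and $\mathbf{g}_{\mathbf{y}}\in\mathbb{R}^{d_{\mathrm{out}}}$ whose moments below exist. Define the per-sample descent matrix $\mathbf{D}^{(t)} = \mathbf{g}_{\mathbf{y}}\mathbf{x}^{\top}$. Suppose the following three conditions (Assumption 1) hold: (1) $\mathbb{E}[\mathbf{D}^{(t)}] = \rho\,\mathbf{U}^{(t)}$ for some weight decay coefficient $\rho>0$; (2) with $\overline{\mathbf{D}}^{(t)} = \mathbb{E}[\mathbf{D}^{(t)}]$, $\mathbf{C}_t = \mathbb{E}\big[(\mathbf{D}^{(t)}-\overline{\mathbf{D}}^{(t)})^{\top}(\mathbf{D}^{(t)}-\overline{\mathbf{D}}^{(t)})\big]$ and $\mathbf{M}_t = (\overline{\mathbf{D}}^{(t)})^{\top}\overline{\mathbf{D}}^{(t)}$, one has $\cos_F(\mathbf{C}_t,\mathbf{M}_t) > \alpha_t$ for some constant $\alpha_t\in(0,1]$; (3) $\mathbb{E}\big[\|\mathbf{g}_{\mathbf{y}}\|_2^2\,\mathbf{x}\mathbf{x}^{\top}\big] = \mathbb{E}\big[\|\mathbf{g}_{\mathbf{y}}\|_2^2\big]\,\mathbb{E}[\mathbf{x}\mathbf{x}^{\top}]$.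 Then $$\cos_F\!\left(\mathbb{E}[\mathbf{x}\mathbf{x}^{\top}],\ (\mathbf{U}^{(t)})^{\top}\mathbf{U}^{(t)}\right) > \alpha_t .$$
   Context: For matrices $\mathbf{A},\mathbf{B}$ of the same shape, the Frobenius cosine similarity is $\cos_F(\mathbf{A},\mathbf{B}) = \operatorname{Tr}(\mathbf{A}^{\top}\mathbf{B})/(\|\mathbf{A}\|_F\|\mathbf{B}\|_F)$. Interpretation: $\mathbf{U}^{(t)} = \mathbf{W}^{(t)}-\mathbf{W}_{\mathrm{pre}}$ is the difference between fine-tuned and pretrained weights of a linear module, $\mathbf{x}$ is an input activation to the module, $\mathbf{y}=\mathbf{U}^{(t)}\mathbf{x}$ is the residual output, and $\mathbf{g}_{\mathbf{y}} = -\nabla_{\mathbf{y}}\ell$ is the backpropagated negative gradient of the fine-tuning loss $\ell$; the SGD update with $L_2$ regularization is $\delta(\mathbf{U}^{(t)}) = \eta(\mathbf{D}^{(t)} - \rho\mathbf{U}^{(t)})$, so condition (1) is equivalent to $\mathbb{E}[\delta(\mathbf{U}^{(t)})]=\mathbf{0}$. All expectations are with respect to the randomness of mini-batch sampling, conditioned on the fine-tuned checkpoint. *)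

theory Defs
  imports "HOL-Probability.Probability"
begin

definition frob_norm :: "real^'n^'m \<Rightarrow> real" where
  "frob_norm A = sqrt (\<Sum>i\<in>UNIV. \<Sum>j\<in>UNIV. (A $ i $ j)^2)"

definition cos_F :: "real^'n^'m \<Rightarrow> real^'n^'m \<Rightarrow> real" where
  "cos_F A B = trace (transpose A ** B) / (frob_norm A * frob_norm B)"

definition outer :: "real^'m \<Rightarrow> real^'n \<Rightarrow> real^'n^'m" where
  "outer a b = (\<chi> i j. a $ i * b $ j)"

end

theory Submission
  imports Defs
begin

text \<open>Expanding the covariance gives \<open>C = E[D\<^sup>T D] - M\<^sub>t\<close>, and \<open>D\<^sup>T D = \<parallel>g\<parallel>\<^sup>2 x x\<^sup>T\<close>, so by
  the decorrelation hypothesis \<open>C = s S\<^sub>x\<^sub>x - \<rho>\<^sup>2 U\<^sup>T U\<close> with \<open>s = E \<parallel>g\<parallel>\<^sup>2\<close>, while \<open>M\<^sub>t = \<rho>\<^sup>2 U\<^sup>T U\<close>.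
  Hence \<open>s S\<^sub>x\<^sub>x\<close> arises from \<open>C\<close> by adding a nonnegative multiple of \<open>U\<^sup>T U\<close>. Such a shift
  leaves the Gram determinant \<open>\<parallel>v\<parallel>\<^sup>2\<parallel>w\<parallel>\<^sup>2 - \<langle>v,w\<rangle>\<^sup>2\<close> unchanged and does not decrease a
  positive \<open>\<langle>v,w\<rangle>\<close>, so it cannot push the cosine with \<open>w\<close> below a positive level \<open>\<alpha>\<close>.\<close>

definition cos_sim :: "'a::real_inner \<Rightarrow> 'a \<Rightarrow> real" where
  "cos_sim v w = inner v w / (norm v * norm w)"

lemma cos_sim_zero_left [simp]: "cos_sim 0 w = 0"
  by (simp add: cos_sim_def)

lemma cos_sim_scaleR_left: "c > 0 \<Longrightarrow> cos_sim (c *\<^sub>R v) w = cos_sim v w"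
  by (simp add: cos_sim_def)

lemma cos_sim_scaleR_right: "c > 0 \<Longrightarrow> cos_sim v (c *\<^sub>R w) = cos_sim v w"
  by (simp add: cos_sim_def)

lemma cos_sim_gt_iff:
  assumes "\<alpha> > 0"
  shows "cos_sim v w > \<alpha> \<longleftrightarrow>
    inner v w > 0 \<and> \<alpha>\<^sup>2 * ((norm v * norm w)\<^sup>2 - (inner v w)\<^sup>2) < (1 - \<alpha>\<^sup>2) * (inner v w)\<^sup>2"
    (is "_ \<longleftrightarrow> ?rhs")
proof (cases "norm v * norm w = 0")
  case True
  then show ?thesis using assms by (auto simp: cos_sim_def)
next
  case False
  then have N: "norm v * norm w > 0" by (simp add: less_le)
  have "cos_sim v w > \<alpha> \<longleftrightarrow> inner v w > \<alpha> * (norm v * norm w)"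
    using N by (simp add: cos_sim_def pos_less_divide_eq)
  also have "\<dots> \<longleftrightarrow> inner v w > 0 \<and> (inner v w)\<^sup>2 > (\<alpha> * (norm v * norm w))\<^sup>2"
  proof
    assume gt: "inner v w > \<alpha> * (norm v * norm w)"
    moreover have "\<alpha> * (norm v * norm w) > 0" using N assms by simp
    ultimately show "inner v w > 0 \<and> (inner v w)\<^sup>2 > (\<alpha> * (norm v * norm w))\<^sup>2"
      by (auto intro: power_strict_mono)
  next
    assume "inner v w > 0 \<and> (inner v w)\<^sup>2 > (\<alpha> * (norm v * norm w))\<^sup>2"
    then show "inner v w > \<alpha> * (norm v * norm w)"
      by (auto intro: power2_less_imp_less)
  qed
  also have "\<dots> \<longleftrightarrow> ?rhs"
    by (simp add: algebra_simps)
  finally show ?thesis .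
qed

lemma gram_add_scaleR:
  fixes v w :: "'a::real_inner"
  shows "(norm (v + c *\<^sub>R w) * norm w)\<^sup>2 - (inner (v + c *\<^sub>R w) w)\<^sup>2
       = (norm v * norm w)\<^sup>2 - (inner v w)\<^sup>2"
proof -
  have "(norm (v + c *\<^sub>R w))\<^sup>2 = (norm v)\<^sup>2 + 2 * c * inner v w + c\<^sup>2 * (norm w)\<^sup>2"
    unfolding power2_norm_eq_inner
    by (simp add: inner_add_left inner_add_right inner_commute algebra_simps power2_eq_square
        del: inner_real_def)
  moreover have "inner (v + c *\<^sub>R w) w = inner v w + c * (norm w)\<^sup>2"
    by (simp add: inner_add_left power2_norm_eq_inner)
  ultimately show ?thesis
    by (simp add: power_mult_distrib) (simp add: power2_eq_square algebra_simps)
qed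

lemma cos_sim_add_scaleR_gt:
  assumes "\<alpha> > 0" and "c \<ge> 0" and "cos_sim v w > \<alpha>"
  shows "cos_sim (v + c *\<^sub>R w) w > \<alpha>"
proof -
  define q where "q = (norm v * norm w)\<^sup>2 - (inner v w)\<^sup>2"
  have pos: "inner v w > 0" and gt: "\<alpha>\<^sup>2 * q < (1 - \<alpha>\<^sup>2) * (inner v w)\<^sup>2"
    using assms(3) unfolding cos_sim_gt_iff[OF assms(1)] q_def by auto
  have "q \<ge> 0"
    unfolding q_def using power_mono[OF Cauchy_Schwarz_ineq2[of v w], of 2] by simp
  have shrink: "1 - \<alpha>\<^sup>2 > 0"
  proof (rule ccontr)
    assume "\<not> 1 - \<alpha>\<^sup>2 > 0"
    then have "(1 - \<alpha>\<^sup>2) * (inner v w)\<^sup>2 \<le> 0" by (simp add: mult_nonpos_nonneg)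
    moreover have "\<alpha>\<^sup>2 * q \<ge> 0" using \<open>q \<ge> 0\<close> by simp
    ultimately show False using gt by linarith
  qed
  have grow: "inner v w \<le> inner (v + c *\<^sub>R w) w"
    using assms(2) by (simp add: inner_add_left)
  then have "(inner v w)\<^sup>2 \<le> (inner (v + c *\<^sub>R w) w)\<^sup>2"
    using pos by (intro power_mono) auto
  then have "(1 - \<alpha>\<^sup>2) * (inner v w)\<^sup>2 \<le> (1 - \<alpha>\<^sup>2) * (inner (v + c *\<^sub>R w) w)\<^sup>2"
    using shrink by (intro mult_left_mono) auto
  then show ?thesis
    unfolding cos_sim_gt_iff[OF assms(1)] gram_add_scaleR q_def[symmetric]
    using pos grow gt by linarith
qed

lemma trace_transpose_mult_eq_inner: "trace (transpose A ** B) = inner A (B :: real^'n^'m)"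
proof -
  have "trace (transpose A ** B) = (\<Sum>j\<in>UNIV. \<Sum>i\<in>UNIV. A $ i $ j * B $ i $ j)"
    unfolding trace_def matrix_matrix_mult_def transpose_def by simp
  also have "\<dots> = (\<Sum>i\<in>UNIV. \<Sum>j\<in>UNIV. A $ i $ j * B $ i $ j)"
    by (rule sum.swap)
  also have "\<dots> = inner A B"
    unfolding inner_vec_def by (simp add: inner_real_def)
  finally show ?thesis .
qed

lemma frob_norm_eq_norm: "frob_norm (A :: real^'n^'m) = norm A"
  unfolding frob_norm_def norm_eq_sqrt_inner inner_vec_def
  by (simp add: inner_real_def power2_eq_square)

lemma cos_F_eq_cos_sim: "cos_F A (B :: real^'n^'m) = cos_sim A B"
  unfolding cos_F_def cos_sim_def trace_transpose_mult_eq_inner frob_norm_eq_norm ..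

lemma transpose_outer_mult_outer:
  "transpose (outer g y) ** outer g y = (norm g)\<^sup>2 *\<^sub>R outer y (y :: real^'n)"
proof -
  have "(\<Sum>k\<in>UNIV. g $ k * y $ i * (g $ k * y $ j))
      = (\<Sum>k\<in>UNIV. g $ k * g $ k) * (y $ i * y $ j)" for i j
    unfolding sum_distrib_right by (simp add: mult_ac)
  then show ?thesis
    by (simp add: vec_eq_iff matrix_matrix_mult_def transpose_def outer_def power2_norm_eq_inner
        inner_vec_def inner_real_def)
qed

lemma transpose_scaleR_mult_scaleR:
  "transpose (r *\<^sub>R A) ** (r *\<^sub>R A) = r\<^sup>2 *\<^sub>R (transpose A ** (A :: real^'n^'m))"
  by (simp add: vec_eq_iff matrix_matrix_mult_def transpose_def sum_distrib_left
      power2_eq_square mult_ac)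

lemma bounded_bilinear_transpose_mult:
  "bounded_bilinear (\<lambda>A B. transpose A ** (B :: real^'n^'m))"
  unfolding bilinear_conv_bounded_bilinear[symmetric] bilinear_def
  by (auto intro!: linearI simp: vec_eq_iff matrix_matrix_mult_def transpose_def
      sum.distrib[symmetric] sum_distrib_left algebra_simps)

lemma (in prob_space) expectation_centered_bilinear:
  fixes D :: "'a \<Rightarrow> 'b::{banach, second_countable_topology}"
    and prod :: "'b \<Rightarrow> 'b \<Rightarrow> 'c::{banach, second_countable_topology}"
  assumes "bounded_bilinear prod"
    and "integrable M D"
    and "integrable M (\<lambda>\<omega>. prod (D \<omega> - expectation D) (D \<omega> - expectation D))"
  shows "integrable M (\<lambda>\<omega>. prod (D \<omega>) (D \<omega>))"
    and "expectation (\<lambda>\<omega>. prod (D \<omega> - expectation D) (D \<omega> - expectation D))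
         = expectation (\<lambda>\<omega>. prod (D \<omega>) (D \<omega>)) - prod (expectation D) (expectation D)"
proof -
  interpret bounded_bilinear prod by fact
  define m where "m = expectation D"
  have expand: "prod (D \<omega>) (D \<omega>) =
      prod (D \<omega> - m) (D \<omega> - m) + prod (D \<omega>) m + prod m (D \<omega>) - prod m m" for \<omega>
    by (simp add: diff_left diff_right)
  have int_l: "integrable M (\<lambda>\<omega>. prod (D \<omega>) m)"
    using integrable_bounded_linear[OF bounded_linear_left assms(2)] .
  have int_r: "integrable M (\<lambda>\<omega>. prod m (D \<omega>))"
    using integrable_bounded_linear[OF bounded_linear_right assms(2)] .
  have exp_l: "expectation (\<lambda>\<omega>. prod (D \<omega>) m) = prod m m"
    using integral_bounded_linear[OF bounded_linear_left assms(2)] by (simp add: m_def)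
  have exp_r: "expectation (\<lambda>\<omega>. prod m (D \<omega>)) = prod m m"
    using integral_bounded_linear[OF bounded_linear_right assms(2)] by (simp add: m_def)
  show "integrable M (\<lambda>\<omega>. prod (D \<omega>) (D \<omega>))"
    unfolding expand using assms(3) int_l int_r by (simp add: m_def)
  have "expectation (\<lambda>\<omega>. prod (D \<omega>) (D \<omega>))
      = expectation (\<lambda>\<omega>. prod (D \<omega> - m) (D \<omega> - m)) + prod m m"
    unfolding expand using assms(3) int_l int_r exp_l exp_r by (simp add: m_def prob_space)
  then show "expectation (\<lambda>\<omega>. prod (D \<omega> - expectation D) (D \<omega> - expectation D))
         = expectation (\<lambda>\<omega>. prod (D \<omega>) (D \<omega>)) - prod (expectation D) (expectation D)"
    by (simp add: m_def)
qed

theorem theorem1: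
  fixes M :: "'s measure"
    and x :: "'s \<Rightarrow> real^'din"
    and gy :: "'s \<Rightarrow> real^'dout"
    and U :: "real^'din^'dout"
    and \<rho> \<alpha> :: real
  defines "D \<equiv> (\<lambda>\<omega>. outer (gy \<omega>) (x \<omega>))"
  defines "Dbar \<equiv> prob_space.expectation M D"
  defines "C \<equiv> prob_space.expectation M (\<lambda>\<omega>. transpose (D \<omega> - Dbar) ** (D \<omega> - Dbar))"
  defines "Mt \<equiv> transpose Dbar ** Dbar"
  defines "Sxx \<equiv> prob_space.expectation M (\<lambda>\<omega>. outer (x \<omega>) (x \<omega>))"
  assumes "prob_space M"
    and "integrable M D"
    and "integrable M (\<lambda>\<omega>. transpose (D \<omega> - Dbar) ** (D \<omega> - Dbar))"
    and "integrable M (\<lambda>\<omega>. outer (x \<omega>) (x \<omega>))"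
    and "integrable M (\<lambda>\<omega>. (norm (gy \<omega>))\<^sup>2)"
    and "integrable M (\<lambda>\<omega>. (norm (gy \<omega>))\<^sup>2 *\<^sub>R outer (x \<omega>) (x \<omega>))"
    and "\<rho> > 0"
    and "Dbar = \<rho> *\<^sub>R U"
    and "0 < \<alpha>" and "\<alpha> \<le> 1"
    and "cos_F C Mt > \<alpha>"
    and "prob_space.expectation M (\<lambda>\<omega>. (norm (gy \<omega>))\<^sup>2 *\<^sub>R outer (x \<omega>) (x \<omega>))
         = prob_space.expectation M (\<lambda>\<omega>. (norm (gy \<omega>))\<^sup>2) *\<^sub>R Sxx"
  shows "cos_F Sxx (transpose U ** U) > \<alpha>"
proof -
  interpret prob_space M by fact
  define P where "P = transpose U ** U"
  define s where "s = expectation (\<lambda>\<omega>. (norm (gy \<omega>))\<^sup>2)"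
  have "C = expectation (\<lambda>\<omega>. transpose (D \<omega>) ** D \<omega>) - Mt"
    unfolding C_def Mt_def Dbar_def
    using expectation_centered_bilinear(2)
        [OF bounded_bilinear_transpose_mult assms(7,8)[unfolded Dbar_def]] .
  also have "expectation (\<lambda>\<omega>. transpose (D \<omega>) ** D \<omega>) = s *\<^sub>R Sxx"
    using assms(17) by (simp add: D_def transpose_outer_mult_outer s_def)
  also have Mt_eq: "Mt = \<rho>\<^sup>2 *\<^sub>R P"
    unfolding Mt_def assms(13) P_def by (rule transpose_scaleR_mult_scaleR)
  finally have C_eq: "C = s *\<^sub>R Sxx - \<rho>\<^sup>2 *\<^sub>R P" .
  have "cos_sim (s *\<^sub>R Sxx - \<rho>\<^sup>2 *\<^sub>R P) P > \<alpha>"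
    using assms(16) assms(12) by (simp add: cos_F_eq_cos_sim C_eq Mt_eq cos_sim_scaleR_right)
  then have cos_s: "cos_sim (s *\<^sub>R Sxx) P > \<alpha>"
    using cos_sim_add_scaleR_gt[OF assms(14), of "\<rho>\<^sup>2"] by fastforce
  have "s \<ge> 0"
    unfolding s_def by (rule integral_nonneg_AE) simp
  moreover have "s \<noteq> 0"
    using cos_s assms(14) by auto
  ultimately have "s > 0" by simp
  then show ?thesis
    using cos_s by (simp add: cos_F_eq_cos_sim cos_sim_scaleR_left P_def)
qed

end
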